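(* Let $\mathbb{X}$ be a discrete group with identity $\circ$, let $\mu$ be a finitely supported probability measure on $\mathbb{X}$ satisfying (A1) $\mu(xzx^{-1})=\mu(z)$ for all $x,z\in\mathbb{X}$ and (A2) $\mu(z)=\mu(z^{-1})$ for all $z\in\mathbb{X}$, and let $(X_t)_{t\ge0}$ be the continuous-time Markov chain on $\mathbb{X}$ started at $X_0=\circ$ with generator $(Lf)(x)=\sum_{z\in\mathbb{X}}\mu(z)(f(xz)-f(x))$. For $t\ge0$ let $f_t(x):=\mathbb{P}(X_t=x)$. Then for all $t\ge 0$, $$2t\,\mathbb{E}\left[\Gamma\log f_t(X_t)\right]\le\sum_{z\in\mathbb{X}}\mathcal{U}(\mu(z)t).$$
   Context: $\Gamma g(x):=\frac12\sum_{z\in\mathbb{X}}\mu(z)(g(xz)-g(x))^2$. The function $\mathcal{U}\colon[0,\infty)\to[0,\infty)$ is $\mathcal{U}(s):=2s\,\mathbb{E}\left[\log_+^2\left\{\frac{1+N_s}{s}\right\}\right]$ for $s>0$, with $\mathcal{U}(0):=0$, where $\log_+(u)=\max\{\log u,0\}$ and $N_s$ is a Poisson random variable with mean $s$. *)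

theory Defs
  imports "HOL-Analysis.Analysis"
begin

text \<open>The group is written additively (type class group_add, not necessarily
commutative): group product x z is x + z, identity is 0, inverse is -z.\<close>

definition supp :: "('a \<Rightarrow> real) \<Rightarrow> 'a set" where
  "supp \<mu> = {z. \<mu> z \<noteq> 0}"

fun conv_pow :: "('a::group_add \<Rightarrow> real) \<Rightarrow> nat \<Rightarrow> 'a \<Rightarrow> real" where
  "conv_pow \<mu> 0 x = (if x = 0 then 1 else 0)"
| "conv_pow \<mu> (Suc n) x = (\<Sum>z\<in>supp \<mu>. conv_pow \<mu> n (x - z) * \<mu> z)"

text \<open>f_t(x) = P(X_t = x) for the chain with generator
 (Lf)(x) = sum_z mu(z)(f(xz) - f(x)) started at the identity, i.e. the entry of
 exp(t L) = exp(-t) sum_n t^n/n! P^n.\<close>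
definition heat_kernel :: "('a::group_add \<Rightarrow> real) \<Rightarrow> real \<Rightarrow> 'a \<Rightarrow> real" where
  "heat_kernel \<mu> t x = (\<Sum>n. exp (- t) * t ^ n / fact n * conv_pow \<mu> n x)"

definition carre_du_champ :: "('a::group_add \<Rightarrow> real) \<Rightarrow> ('a \<Rightarrow> real) \<Rightarrow> 'a \<Rightarrow> real" where
  "carre_du_champ \<mu> g x = 1/2 * (\<Sum>z\<in>supp \<mu>. \<mu> z * (g (x + z) - g x)^2)"

definition log_plus :: "real \<Rightarrow> real" where
  "log_plus u = max (ln u) 0"

definition U_fun :: "real \<Rightarrow> real" where
  "U_fun s = (if s = 0 then 0 else
     2 * s * (\<Sum>n. exp (- s) * s ^ n / fact n * (log_plus ((1 + real n) / s))^2))"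

end

theory Submission
  imports Defs
begin

text \<open>Fix z in the support of \<mu>. By conjugation invariance the steps of the walk equal to z
  commute with all other steps, so X(t) is z added k times to an independent walk driven by the
  remaining steps, where k is Poisson with mean s = \<mu>(z) t. Adding one more step z maps the weight
  of k such steps at x to the weight of k + 1 steps at x + z, multiplied by s / (k + 1). Jensen's
  inequality for the convex decreasing function v \<mapsto> log_plus(1/v)^2 then bounds the expected
  square of the negative part of ln f(t, X(t) + z) - ln f(t, X(t)) by E[log_plus((1 + N(s))/s)^2].
  The positive part is the same bound for the step -z, by the symmetry of \<mu>, and summing over z
  with weights \<mu>(z)/2 gives the claim.\<close>

subsection \<open>Infinite sums\<close>

lemma has_sum_sum:
  fixes f :: "'i \<Rightarrow> 'a \<Rightarrow> 'b::topological_comm_monoid_add"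
  assumes "finite I" and "\<And>i. i \<in> I \<Longrightarrow> (f i has_sum s i) A"
  shows "((\<lambda>x. \<Sum>i\<in>I. f i x) has_sum (\<Sum>i\<in>I. s i)) A"
  using assms by (induction I rule: finite_induct) (auto intro: has_sum_add)

lemma has_sum_comparison:
  fixes f g :: "'a \<Rightarrow> real"
  assumes "(f has_sum S) A" and "\<And>x. x \<in> A \<Longrightarrow> 0 \<le> g x" and "\<And>x. x \<in> A \<Longrightarrow> g x \<le> f x"
  shows "\<exists>T. (g has_sum T) A \<and> T \<le> S"
proof -
  have "g summable_on A"
    using assms by (intro summable_on_comparison_test[OF has_sum_imp_summable]) auto
  then show ?thesis
    using assms by (intro exI[of _ "infsum g A"] conjI has_sum_mono[OF has_sum_infsum]) auto
qed

lemma has_sum_Sigma_nonneg: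
  fixes f :: "'a \<times> 'b \<Rightarrow> real"
  assumes "\<And>x y. x \<in> A \<Longrightarrow> y \<in> B x \<Longrightarrow> 0 \<le> f (x, y)"
    and "\<And>x. x \<in> A \<Longrightarrow> ((\<lambda>y. f (x, y)) has_sum g x) (B x)" and "(g has_sum S) A"
  shows "(f has_sum S) (Sigma A B)"
  using assms by (intro has_sum_SigmaI summable_on_SigmaI[where g = g] has_sum_imp_summable) auto

lemma has_sum_swap_nonneg:
  fixes f :: "'a \<Rightarrow> 'b \<Rightarrow> real"
  assumes "\<And>x y. 0 \<le> f x y"
    and "\<And>y. ((\<lambda>x. f x y) has_sum g y) UNIV" and "(g has_sum S) UNIV"
  shows "f x summable_on UNIV" and "((\<lambda>x. \<Sum>\<^sub>\<infinity>y. f x y) has_sum S) UNIV"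
proof -
  have "((\<lambda>(y, x). f x y) has_sum S) (UNIV \<times> UNIV)"
    using assms by (intro has_sum_Sigma_nonneg) auto
  then have joint: "((\<lambda>(x, y). f x y) has_sum S) (UNIV \<times> UNIV)"
    by (subst has_sum_swap) simp
  show summable: "f x summable_on UNIV" for x
    using summable_on_SigmaD1[OF has_sum_imp_summable[OF joint]] by simp
  show "((\<lambda>x. \<Sum>\<^sub>\<infinity>y. f x y) has_sum S) UNIV"
    using summable by (intro has_sum_Sigma'[OF joint]) auto
qed

lemma has_sum_translate:
  fixes g :: "'a::group_add \<Rightarrow> 'b::topological_comm_monoid_add"
  shows "((\<lambda>x. g (x + c)) has_sum s) UNIV \<longleftrightarrow> (g has_sum s) UNIV"
  by (rule has_sum_reindex_bij_witness[where i = "\<lambda>x. x - c" and j = "\<lambda>x. x + c"]) auto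

lemma has_sum_exp_series:
  fixes y :: real
  assumes "0 \<le> y"
  shows "((\<lambda>n. y ^ n / fact n) has_sum exp y) UNIV"
  using assms exp_converges[of y]
  by (intro sums_nonneg_imp_has_sum) (auto simp: divide_inverse_commute)

lemma has_sum_poisson_thinning:
  fixes a t :: real and \<phi> :: "nat \<Rightarrow> real"
  assumes "0 \<le> a" "a \<le> 1" "0 \<le> t" "\<And>k. 0 \<le> \<phi> k"
    and "((\<lambda>k. exp (- (a * t)) * (a * t) ^ k / fact k * \<phi> k) has_sum P) UNIV"
  shows "((\<lambda>(k, m). exp (- t) * ((a * t) ^ k / fact k) * (t ^ m / fact m) * (1 - a) ^ m * \<phi> k)
           has_sum P) UNIV"
proof -
  have "((\<lambda>m. exp (- t) * ((a * t) ^ k / fact k) * (t ^ m / fact m) * (1 - a) ^ m * \<phi> k)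
         has_sum exp (- (a * t)) * (a * t) ^ k / fact k * \<phi> k) UNIV" for k
  proof -
    have "((\<lambda>m. exp (- t) * ((a * t) ^ k / fact k) * \<phi> k * (((1 - a) * t) ^ m / fact m))
           has_sum exp (- t) * ((a * t) ^ k / fact k) * \<phi> k * exp ((1 - a) * t)) UNIV"
      using assms by (intro has_sum_cmult_right has_sum_exp_series) auto
    moreover have "exp (- t) * exp ((1 - a) * t) = exp (- (a * t))"
      by (simp add: exp_add[symmetric] algebra_simps)
    ultimately show ?thesis
      by (simp add: power_mult_distrib mult_ac)
  qed
  then have "((\<lambda>(k, m). exp (- t) * ((a * t) ^ k / fact k) * (t ^ m / fact m) * (1 - a) ^ m * \<phi> k)
           has_sum P) (UNIV \<times> UNIV)"
    using assms by (intro has_sum_Sigma_nonneg) auto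
  then show ?thesis
    by simp
qed

subsection \<open>Jensen's inequality for the squared negative logarithm\<close>

definition log_minus_sq :: "real \<Rightarrow> real" where
  "log_minus_sq v = (log_plus (1 / v))\<^sup>2"

lemma log_minus_sq_nonneg: "0 \<le> log_minus_sq v"
  by (simp add: log_minus_sq_def)

lemma log_minus_sq_eq: "0 < v \<Longrightarrow> log_minus_sq v = (max (- ln v) 0)\<^sup>2"
  by (simp add: log_minus_sq_def log_plus_def ln_div)

lemma log_minus_sq_eq_0: "1 \<le> v \<Longrightarrow> log_minus_sq v = 0"
  by (simp add: log_minus_sq_eq max_def)

lemma log_minus_sq_antimono: "0 < v \<Longrightarrow> v \<le> v' \<Longrightarrow> log_minus_sq v' \<le> log_minus_sq v"
  by (simp add: log_minus_sq_eq power_mono max_def)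

lemma ln_diff_sq_eq_log_minus_sq:
  assumes "0 < a" "0 < b"
  shows "(ln b - ln a)\<^sup>2 = log_minus_sq (b / a) + log_minus_sq (a / b)"
proof -
  define d where "d = ln b - ln a"
  have "d\<^sup>2 = (max (- d) 0)\<^sup>2 + (max d 0)\<^sup>2"
    by (cases "d \<le> 0") (simp_all add: max_def)
  then show ?thesis
    using assms by (simp add: log_minus_sq_eq ln_div d_def)
qed

lemma mult_log_minus_sq_div_le:
  assumes "0 \<le> b"
  shows "a * log_minus_sq (a / b) \<le> b * log_minus_sq (a / b)"
proof (cases "a \<le> b")
  case True
  then show ?thesis
    by (simp add: mult_right_mono log_minus_sq_nonneg)
next
  case False
  then have "log_minus_sq (a / b) = 0"
    using assms by (cases "b = 0") (simp_all add: log_minus_sq_def log_plus_def log_minus_sq_eq_0 le_divide_eq_1)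
  then show ?thesis
    by simp
qed

lemma log_minus_sq_supporting_line:
  assumes m: "0 < m"
  shows "\<exists>D. \<forall>v>0. log_minus_sq m + D * (v - m) \<le> log_minus_sq v"
proof (cases "m < 1")
  case False
  then show ?thesis
    using log_minus_sq_eq_0[of m] log_minus_sq_nonneg by (intro exI[of _ 0]) simp
next
  case True
  have "log_minus_sq m + 2 * ln m / m * (v - m) \<le> log_minus_sq v" if v: "0 < v" for v
  proof -
    have "ln v - ln m \<le> v / m - 1"
      using ln_le_minus_one[of "v / m"] v m by (simp add: ln_div)
    have "2 * ln m / m * (v - m) = 2 * ln m * (v / m - 1)"
      using m by (simp add: field_simps)
    also have "\<dots> \<le> 2 * ln m * (ln v - ln m)"
      using \<open>ln v - ln m \<le> v / m - 1\<close> True m by (intro mult_left_mono_neg) auto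
    finally have "2 * ln m / m * (v - m) \<le> 2 * ln m * (ln v - ln m)" .
    moreover have "(ln m)\<^sup>2 + 2 * ln m * (ln v - ln m) \<le> (max (- ln v) 0)\<^sup>2"
    proof (cases "ln v \<le> 0")
      case True
      then have "(max (- ln v) 0)\<^sup>2 = (ln m)\<^sup>2 + 2 * ln m * (ln v - ln m) + (ln v - ln m)\<^sup>2"
        by (simp add: max_def power2_eq_square algebra_simps)
      then show ?thesis
        by simp
    next
      case False
      then have "ln m * ln v < 0"
        using ln_less_zero[OF m True] by (simp add: mult_neg_pos)
      moreover have "(ln m)\<^sup>2 + 2 * ln m * (ln v - ln m) = 2 * (ln m * ln v) - (ln m)\<^sup>2"
        by (simp add: power2_eq_square algebra_simps)
      ultimately show ?thesis
        using zero_le_power2[of "ln m"] zero_le_power2[of "max (- ln v) 0"] by linarith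
    qed
    ultimately show ?thesis
      using True m v by (simp add: log_minus_sq_eq max_def)
  qed
  then show ?thesis by blast
qed

lemma has_sum_jensen_antimono:
  fixes w u :: "'i \<Rightarrow> real" and F :: "real \<Rightarrow> real"
  assumes antimono: "\<And>v v'. 0 < v \<Longrightarrow> v \<le> v' \<Longrightarrow> F v' \<le> F v"
    and supporting: "\<And>m. 0 < m \<Longrightarrow> \<exists>D. \<forall>v>0. F m + D * (v - m) \<le> F v"
    and w: "\<And>i. 0 \<le> w i" and u: "\<And>i. 0 < u i"
    and W: "(w has_sum W) I" and B: "((\<lambda>i. w i * u i) has_sum B) I"
    and C: "((\<lambda>i. w i * F (u i)) has_sum C) I"
    and W_pos: "0 < W" and B_le: "B \<le> Y"
  shows "W * F (Y / W) \<le> C"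
proof -
  have "0 < B"
  proof (rule ccontr)
    assume "\<not> 0 < B"
    then have "w i * u i = 0" if "i \<in> I" for i
      using nonneg_has_sum_le_0D[OF B] w u that by (simp add: less_imp_le)
    then have "(w has_sum 0) I"
      using u by (intro has_sum_0) (metis less_irrefl mult_eq_0_iff)
    then show False
      using W W_pos has_sum_unique by force
  qed
  define m where "m = B / W"
  have m: "0 < m" "m * W = B"
    using \<open>0 < B\<close> W_pos by (simp_all add: m_def)
  obtain D where D: "\<And>v. 0 < v \<Longrightarrow> F m + D * (v - m) \<le> F v"
    using supporting[OF m(1)] by blast
  have "W * F (Y / W) \<le> W * F m"
    using antimono[OF m(1)] B_le W_pos by (simp add: m_def divide_right_mono)
  also have "W * F m = F m * W + D * B + (- D * m) * W"
    using m(2) by (simp add: algebra_simps)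
  also have "\<dots> \<le> C"
  proof (rule has_sum_mono)
    show "((\<lambda>i. F m * w i + D * (w i * u i) + (- D * m) * w i) has_sum
            F m * W + D * B + (- D * m) * W) I"
      by (intro has_sum_add has_sum_cmult_right W B)
    show "F m * w i + D * (w i * u i) + (- D * m) * w i \<le> w i * F (u i)" for i
      using mult_left_mono[OF D[OF u[of i]] w[of i]] by (simp add: algebra_simps)
  qed (rule C)
  finally show ?thesis .
qed

definition log_plus_sq_moment :: "real \<Rightarrow> real" where
  "log_plus_sq_moment s = (\<Sum>n. exp (- s) * s ^ n / fact n * (log_plus ((1 + real n) / s))\<^sup>2)"

lemma U_fun_eq: "U_fun s = 2 * s * log_plus_sq_moment s"
  by (simp add: U_fun_def log_plus_sq_moment_def)

lemma has_sum_log_plus_sq_moment: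
  assumes s: "0 < s"
  shows "((\<lambda>n. exp (- s) * s ^ n / fact n * (log_plus ((1 + real n) / s))\<^sup>2)
           has_sum log_plus_sq_moment s) UNIV"
proof -
  let ?a = "\<lambda>n. exp (- s) * s ^ n / fact n * (log_plus ((1 + real n) / s))\<^sup>2"
  have log_bound: "(log_plus ((1 + real n) / s))\<^sup>2 \<le> 4 ^ n / s\<^sup>2" for n
  proof -
    have "log_plus ((1 + real n) / s) \<le> (1 + real n) / s"
      using ln_le_minus_one[of "(1 + real n) / s"] s by (auto simp: log_plus_def)
    moreover have "1 + real n \<le> 2 ^ n"
      using of_nat_mono[OF Suc_leI[OF less_exp[of n]], where 'a = real] by simp
    ultimately have "log_plus ((1 + real n) / s) \<le> 2 ^ n / s"
      using s by (meson order_trans divide_right_mono less_imp_le)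
    then have "(log_plus ((1 + real n) / s))\<^sup>2 \<le> (2 ^ n / s)\<^sup>2"
      by (intro power_mono) (simp_all add: log_plus_def)
    also have "(2 ^ n / s)\<^sup>2 = 4 ^ n / s\<^sup>2"
      by (simp add: power_divide flip: power_mult) (simp add: mult.commute[of n 2] power_mult)
    finally show ?thesis .
  qed
  have bound: "?a n \<le> exp (- s) / s\<^sup>2 * ((4 * s) ^ n / fact n)" for n
  proof -
    have "?a n \<le> exp (- s) * s ^ n / fact n * (4 ^ n / s\<^sup>2)"
      using log_bound s by (intro mult_left_mono) auto
    also have "\<dots> = exp (- s) / s\<^sup>2 * ((4 * s) ^ n / fact n)"
      by (simp add: power_mult_distrib mult_ac)
    finally show ?thesis .
  qed
  have "?a summable_on UNIV"
  proof (rule summable_on_comparison_test[OF has_sum_imp_summable])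
    show "((\<lambda>n. exp (- s) / s\<^sup>2 * ((4 * s) ^ n / fact n)) has_sum exp (- s) / s\<^sup>2 * exp (4 * s)) UNIV"
      using s by (intro has_sum_cmult_right has_sum_exp_series) simp
    show "0 \<le> ?a n" for n
      using s by simp
  qed (rule bound)
  then have "?a sums infsum ?a UNIV"
    by (intro has_sum_imp_sums) simp
  then show ?thesis
    using \<open>?a summable_on UNIV\<close> by (simp add: log_plus_sq_moment_def sums_iff)
qed

subsection \<open>Convolution powers\<close>

lemma conv_pow_nonneg: "(\<And>z. 0 \<le> \<nu> z) \<Longrightarrow> 0 \<le> conv_pow \<nu> n x"
  by (induction n arbitrary: x) (auto intro!: sum_nonneg)

lemma has_sum_conv_pow:
  fixes \<nu> :: "'a::group_add \<Rightarrow> real"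
  assumes "finite (supp \<nu>)"
  shows "(conv_pow \<nu> n has_sum (\<Sum>w\<in>supp \<nu>. \<nu> w) ^ n) UNIV"
proof (induction n)
  case 0
  show ?case
    by (rule has_sum_finite_neutralI[of "{0}"]) auto
next
  case (Suc n)
  have "((\<lambda>x. conv_pow \<nu> n (x - w) * \<nu> w) has_sum (\<Sum>w\<in>supp \<nu>. \<nu> w) ^ n * \<nu> w) UNIV" for w
    using Suc has_sum_translate[of "conv_pow \<nu> n" "- w"] by (intro has_sum_cmult_left) simp
  then have "((\<lambda>x. \<Sum>w\<in>supp \<nu>. conv_pow \<nu> n (x - w) * \<nu> w)
             has_sum (\<Sum>w\<in>supp \<nu>. (\<Sum>w\<in>supp \<nu>. \<nu> w) ^ n * \<nu> w)) UNIV"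
    using assms by (intro has_sum_sum)
  moreover have "conv_pow \<nu> (Suc n) = (\<lambda>x. \<Sum>w\<in>supp \<nu>. conv_pow \<nu> n (x - w) * \<nu> w)"
    by (rule ext) simp
  moreover have "(\<Sum>w\<in>supp \<nu>. (\<Sum>w\<in>supp \<nu>. \<nu> w) ^ n * \<nu> w) = (\<Sum>w\<in>supp \<nu>. \<nu> w) ^ Suc n"
    unfolding sum_distrib_left[symmetric] by simp
  ultimately show ?case
    by (simp only:)
qed

lemma conv_pow_le_one:
  fixes \<nu> :: "'a::group_add \<Rightarrow> real"
  assumes "\<And>z. 0 \<le> \<nu> z" "finite (supp \<nu>)" "(\<Sum>w\<in>supp \<nu>. \<nu> w) \<le> 1"
  shows "conv_pow \<nu> n x \<le> 1"
proof -
  have "conv_pow \<nu> n x \<le> (\<Sum>w\<in>supp \<nu>. \<nu> w) ^ n"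
    using finite_sum_le_has_sum[OF has_sum_conv_pow[OF assms(2)], of "{x}"]
      conv_pow_nonneg[of \<nu>] assms(1) by auto
  also have "\<dots> \<le> 1"
    using assms by (simp add: power_le_one sum_nonneg)
  finally show ?thesis .
qed

lemma conv_pow_Suc_ge:
  fixes \<nu> :: "'a::group_add \<Rightarrow> real"
  assumes "\<And>z. 0 \<le> \<nu> z" "finite (supp \<nu>)" "w \<in> supp \<nu>"
  shows "conv_pow \<nu> n x * \<nu> w \<le> conv_pow \<nu> (Suc n) (x + w)"
  using member_le_sum[of w "supp \<nu>" "\<lambda>v. conv_pow \<nu> n (x + w - v) * \<nu> v"] assms
  by (simp add: conv_pow_nonneg)

fun add_pow :: "'a::monoid_add \<Rightarrow> nat \<Rightarrow> 'a" where
  "add_pow z 0 = 0"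
| "add_pow z (Suc k) = add_pow z k + z"

lemma add_pow_commute: "add_pow z k + z = z + add_pow z k"
  by (induction k) (simp_all add: add.assoc)

lemma diff_add_pow_Suc:
  fixes z :: "'a::group_add"
  shows "x - add_pow z (Suc k) = x - z - add_pow z k"
  by (simp add: diff_conv_add_uminus minus_add add.assoc del: add_uminus_conv_diff)

lemma supp_fun_upd_zero: "supp (\<mu>(z := 0)) = supp \<mu> - {z}"
  by (auto simp: supp_def)

lemma fun_upd_zero_conj_invariant:
  fixes \<mu> :: "'a::group_add \<Rightarrow> real"
  assumes "\<And>w. \<mu> (c + w - c) = \<mu> w" and "c + z = z + c"
  shows "(\<mu>(z := 0)) (c + w - c) = (\<mu>(z := 0)) w"
proof -
  have "c + w - c = z \<longleftrightarrow> w = z"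
    using assms(2) by (metis add_diff_cancel add_minus_cancel diff_add_cancel)
  then show ?thesis
    using assms(1) by simp
qed

lemma sum_supp_conj:
  fixes \<nu> :: "'a::group_add \<Rightarrow> real"
  assumes conj: "\<And>w. \<nu> (c + w - c) = \<nu> w"
  shows "(\<Sum>w\<in>supp \<nu>. g (x - w - c) * \<nu> w) = (\<Sum>w\<in>supp \<nu>. g (x - c - w) * \<nu> w)"
proof (rule sum.reindex_bij_witness[where i = "\<lambda>w. - c + w + c" and j = "\<lambda>w. c + w - c"])
  fix w
  show "- c + (c + w - c) + c = w" "c + (- c + w + c) - c = w"
    by (simp_all add: diff_conv_add_uminus add.assoc del: add_uminus_conv_diff)
  have "\<nu> (- c + w + c) = \<nu> w"
    using conj[of "- c + w + c"] by (simp add: diff_conv_add_uminus add.assoc del: add_uminus_conv_diff)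
  then show "- c + w + c \<in> supp \<nu>" if "w \<in> supp \<nu>"
    using that by (simp add: supp_def)
  show "c + w - c \<in> supp \<nu>" if "w \<in> supp \<nu>"
    using that conj[of w] by (simp add: supp_def)
  have "x - c - (c + w - c) = x - w - c"
    by (simp add: diff_conv_add_uminus minus_add add.assoc del: add_uminus_conv_diff)
  then show "g (x - c - (c + w - c)) * \<nu> (c + w - c) = g (x - w - c) * \<nu> w"
    using conj[of w] by simp
qed

lemma sum_choose_Suc:
  fixes G :: "nat \<Rightarrow> real"
  shows "(\<Sum>k\<le>Suc n. real (Suc n choose k) * G k)
       = (\<Sum>k\<le>n. real (n choose k) * G (Suc k)) + (\<Sum>k\<le>n. real (n choose k) * G k)"
proof -
  have "(\<Sum>k\<le>Suc n. real (Suc n choose k) * G k)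
      = (\<Sum>k\<le>n. real (n choose k) * G (Suc k)) + (G 0 + (\<Sum>k\<le>n. real (n choose Suc k) * G (Suc k)))"
    by (subst sum.atMost_Suc_shift) (simp add: sum.distrib algebra_simps)
  also have "G 0 + (\<Sum>k\<le>n. real (n choose Suc k) * G (Suc k)) = (\<Sum>k\<le>Suc n. real (n choose k) * G k)"
    by (subst sum.atMost_Suc_shift) simp
  also have "\<dots> = (\<Sum>k\<le>n. real (n choose k) * G k)"
    by simp
  finally show ?thesis .
qed

text \<open>Conjugation invariance lets every step equal to z be moved to the front of a product of
  steps, so the n-th convolution power of \<mu> = \<mu>(z := 0) + (point mass \<mu> z at z) expands
  binomially.\<close>

lemma conv_pow_split:
  fixes \<mu> :: "'a::group_add \<Rightarrow> real"
  assumes fin: "finite (supp \<mu>)" and conj: "\<And>x w. \<mu> (x + w - x) = \<mu> w" and z: "z \<in> supp \<mu>"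
  shows "conv_pow \<mu> n x = (\<Sum>k\<le>n. real (n choose k) *
           (\<mu> z ^ k * conv_pow (\<mu>(z := 0)) (n - k) (x - add_pow z k)))"
proof (induction n arbitrary: x)
  case 0
  then show ?case by simp
next
  case (Suc n)
  let ?R = "conv_pow (\<mu>(z := 0))"
  let ?S = "supp (\<mu>(z := 0))"
  define G where "G k = \<mu> z ^ k * ?R (Suc n - k) (x - add_pow z k)" for k
  have "conv_pow \<mu> (Suc n) x
      = conv_pow \<mu> n (x - z) * \<mu> z + (\<Sum>w\<in>?S. conv_pow \<mu> n (x - w) * (\<mu>(z := 0)) w)"
    using fin z by (simp add: sum.remove supp_fun_upd_zero)
  also have "conv_pow \<mu> n (x - z) * \<mu> z = (\<Sum>k\<le>n. real (n choose k) * G (Suc k))"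
    unfolding Suc sum_distrib_right G_def
    by (intro sum.cong refl) (simp add: diff_add_pow_Suc del: add_pow.simps)
  also have "(\<Sum>w\<in>?S. conv_pow \<mu> n (x - w) * (\<mu>(z := 0)) w)
      = (\<Sum>k\<le>n. real (n choose k) * \<mu> z ^ k *
           (\<Sum>w\<in>?S. ?R (n - k) (x - w - add_pow z k) * (\<mu>(z := 0)) w))"
    unfolding Suc by (simp add: sum_distrib_right sum_distrib_left sum.swap[of _ ?S] mult_ac)
  also have "\<dots> = (\<Sum>k\<le>n. real (n choose k) * \<mu> z ^ k *
           (\<Sum>w\<in>?S. ?R (n - k) (x - add_pow z k - w) * (\<mu>(z := 0)) w))"
    using conj add_pow_commute
    by (intro sum.cong refl arg_cong2[where f = "(*)"] sum_supp_conj fun_upd_zero_conj_invariant)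
  also have "\<dots> = (\<Sum>k\<le>n. real (n choose k) * G k)"
    unfolding G_def by (intro sum.cong refl) (simp add: Suc_diff_le)
  finally show ?case
    unfolding sum_choose_Suc G_def by simp
qed

text \<open>The probability that the chain is at x at time t after exactly k steps equal to z and
  m other steps.\<close>

definition split_kernel :: "('a::group_add \<Rightarrow> real) \<Rightarrow> 'a \<Rightarrow> real \<Rightarrow> nat \<Rightarrow> nat \<Rightarrow> 'a \<Rightarrow> real" where
  "split_kernel \<mu> z t k m x = exp (- t) * ((\<mu> z * t) ^ k / fact k) * (t ^ m / fact m)
      * conv_pow (\<mu>(z := 0)) m (x - add_pow z k)"

lemma split_kernel_Suc:
  "split_kernel \<mu> z t (Suc k) m (x + z) = split_kernel \<mu> z t k m x * (\<mu> z * t / (1 + real k))"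
  unfolding split_kernel_def diff_add_pow_Suc by (simp add: field_simps)

subsection \<open>The heat kernel\<close>

locale random_walk =
  fixes \<mu> :: "'a::group_add \<Rightarrow> real"
  assumes nonneg: "\<And>z. 0 \<le> \<mu> z"
    and finite_supp: "finite (supp \<mu>)"
    and sum_supp: "(\<Sum>z\<in>supp \<mu>. \<mu> z) = 1"
begin

lemma pos_on_supp: "z \<in> supp \<mu> \<Longrightarrow> 0 < \<mu> z"
  using nonneg[of z] by (simp add: supp_def)

lemma le_one: "\<mu> z \<le> 1"
  using member_le_sum[of z "supp \<mu>" \<mu>] nonneg finite_supp sum_supp by (cases "z \<in> supp \<mu>") (auto simp: supp_def)

lemma has_sum_heat_kernel_series:
  assumes t: "0 \<le> t"
  shows "((\<lambda>n. exp (- t) * t ^ n / fact n * conv_pow \<mu> n x) has_sum heat_kernel \<mu> t x) UNIV"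
proof -
  let ?a = "\<lambda>n. exp (- t) * t ^ n / fact n * conv_pow \<mu> n x"
  have terms_nonneg: "0 \<le> ?a n" for n
    using t by (intro mult_nonneg_nonneg divide_nonneg_nonneg conv_pow_nonneg nonneg) auto
  have "?a n \<le> exp (- t) * (t ^ n / fact n)" for n
    using mult_left_le[of "conv_pow \<mu> n x" "exp (- t) * t ^ n / fact n"]
      conv_pow_le_one[OF nonneg finite_supp] t sum_supp by simp
  then have "?a summable_on UNIV"
    using t nonneg has_sum_cmult_right[OF has_sum_exp_series[OF t], of "exp (- t)"]
    by (intro summable_on_comparison_test[OF has_sum_imp_summable] terms_nonneg) auto
  then have "?a sums infsum ?a UNIV"
    by (intro has_sum_imp_sums) simp
  then show ?thesis
    using \<open>?a summable_on UNIV\<close> by (simp add: heat_kernel_def sums_iff)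
qed

lemma heat_kernel_nonneg: "0 \<le> t \<Longrightarrow> 0 \<le> heat_kernel \<mu> t x"
  by (rule has_sum_nonneg[OF has_sum_heat_kernel_series])
    (auto intro!: mult_nonneg_nonneg divide_nonneg_nonneg conv_pow_nonneg nonneg)

lemma heat_kernel_time_zero: "heat_kernel \<mu> 0 x = (if x = 0 then 1 else 0)"
proof -
  have "((\<lambda>n. exp (- 0) * 0 ^ n / fact n * conv_pow \<mu> n x) has_sum (if x = 0 then 1 else 0)) UNIV"
    by (rule has_sum_finite_neutralI[of "{0}"]) auto
  then show ?thesis
    using has_sum_heat_kernel_series[of 0 x] has_sum_unique by blast
qed

lemma heat_kernel_pos_step:
  assumes t: "0 < t" and pos: "0 < heat_kernel \<mu> t x" and w: "w \<in> supp \<mu>"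
  shows "0 < heat_kernel \<mu> t (x + w)"
proof -
  have series: "((\<lambda>n. exp (- t) * t ^ n / fact n * conv_pow \<mu> n y) has_sum heat_kernel \<mu> t y) UNIV" for y
    using t by (intro has_sum_heat_kernel_series) simp
  have "\<exists>n. conv_pow \<mu> n x \<noteq> 0"
  proof (rule ccontr)
    assume "\<nexists>n. conv_pow \<mu> n x \<noteq> 0"
    then have "((\<lambda>n. exp (- t) * t ^ n / fact n * conv_pow \<mu> n x) has_sum 0) UNIV"
      by simp
    then show False
      using series[of x] pos has_sum_unique by force
  qed
  then obtain n where "conv_pow \<mu> n x \<noteq> 0" ..
  then have "0 < conv_pow \<mu> n x * \<mu> w"
    using conv_pow_nonneg[of \<mu>, OF nonneg] pos_on_supp[OF w] by (simp add: order_less_le)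
  also have "\<dots> \<le> conv_pow \<mu> (Suc n) (x + w)"
    by (rule conv_pow_Suc_ge[OF nonneg finite_supp w])
  finally have "0 < exp (- t) * t ^ Suc n / fact (Suc n) * conv_pow \<mu> (Suc n) (x + w)"
    using t by simp
  also have "\<dots> \<le> heat_kernel \<mu> t (x + w)"
    using finite_sum_le_has_sum[OF series, of "{Suc n}"] t by (simp add: conv_pow_nonneg nonneg)
  finally show ?thesis .
qed

lemma split_kernel_nonneg: "0 \<le> t \<Longrightarrow> 0 \<le> split_kernel \<mu> z t k m x"
  unfolding split_kernel_def using nonneg by (intro mult_nonneg_nonneg conv_pow_nonneg) auto

lemma has_sum_split_kernel_marginal:
  assumes z: "z \<in> supp \<mu>"
  shows "((\<lambda>x. split_kernel \<mu> z t k m x) has_sum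
           exp (- t) * ((\<mu> z * t) ^ k / fact k) * (t ^ m / fact m) * (1 - \<mu> z) ^ m) UNIV"
proof -
  have "(\<Sum>w\<in>supp (\<mu>(z := 0)). (\<mu>(z := 0)) w) = 1 - \<mu> z"
    using finite_supp z sum_supp by (simp add: supp_fun_upd_zero sum_diff1)
  then have "(conv_pow (\<mu>(z := 0)) m has_sum (1 - \<mu> z) ^ m) UNIV"
    using has_sum_conv_pow[of "\<mu>(z := 0)" m] finite_supp by (simp add: supp_fun_upd_zero)
  then have "((\<lambda>x. conv_pow (\<mu>(z := 0)) m (x - add_pow z k)) has_sum (1 - \<mu> z) ^ m) UNIV"
    using has_sum_translate[of "conv_pow (\<mu>(z := 0)) m" "- add_pow z k"] by simp
  then show ?thesis
    unfolding split_kernel_def by (rule has_sum_cmult_right)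
qed

end

locale central_random_walk = random_walk +
  assumes conj_invariant: "\<And>x z. \<mu> (x + z - x) = \<mu> z"
begin

lemma heat_kernel_term_split:
  assumes z: "z \<in> supp \<mu>"
  shows "exp (- t) * t ^ n / fact n * conv_pow \<mu> n x = (\<Sum>k\<le>n. split_kernel \<mu> z t k (n - k) x)"
proof -
  have "exp (- t) * t ^ n / fact n * (real (n choose k) * (\<mu> z ^ k * c))
      = exp (- t) * ((\<mu> z * t) ^ k / fact k) * (t ^ (n - k) / fact (n - k)) * c"
    if "k \<le> n" for k c
  proof -
    have "t ^ n = t ^ k * t ^ (n - k)"
      using that by (simp flip: power_add)
    then show ?thesis
      using that by (simp add: binomial_fact power_mult_distrib field_simps)
  qed
  then show ?thesis
    unfolding conv_pow_split[OF finite_supp conj_invariant z] split_kernel_def sum_distrib_left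
    by (intro sum.cong) auto
qed

lemma has_sum_split_kernel:
  assumes z: "z \<in> supp \<mu>" and t: "0 \<le> t"
  shows "((\<lambda>(k, m). split_kernel \<mu> z t k m x) has_sum heat_kernel \<mu> t x) UNIV"
proof -
  have "((\<lambda>k. split_kernel \<mu> z t k (n - k) x) has_sum exp (- t) * t ^ n / fact n * conv_pow \<mu> n x)
          {..n}" for n
    unfolding heat_kernel_term_split[OF z] by (intro has_sum_finiteI) auto
  then have "((\<lambda>(n, k). split_kernel \<mu> z t k (n - k) x) has_sum heat_kernel \<mu> t x) (SIGMA n:UNIV. {..n})"
    using has_sum_heat_kernel_series[OF t] split_kernel_nonneg[OF t]
    by (intro has_sum_Sigma_nonneg) auto
  also have "?this \<longleftrightarrow> ((\<lambda>(k, m). split_kernel \<mu> z t k m x) has_sum heat_kernel \<mu> t x) UNIV"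
    by (rule has_sum_reindex_bij_witness[where j = "\<lambda>(n, k). (k, n - k)" and i = "\<lambda>(k, m). (k + m, k)"])
      auto
  finally show ?thesis .
qed

lemma has_sum_split_kernel_shift:
  assumes z: "z \<in> supp \<mu>" and t: "0 \<le> t"
  shows "\<exists>B. ((\<lambda>(k, m). split_kernel \<mu> z t k m x * (\<mu> z * t / (1 + real k))) has_sum B) UNIV
           \<and> B \<le> heat_kernel \<mu> t (x + z)"
proof -
  define g where "g = (\<lambda>(k, m). split_kernel \<mu> z t k m (x + z))"
  define h where "h = (\<lambda>(k :: nat, m :: nat). (Suc k, m))"
  have g: "(g has_sum heat_kernel \<mu> t (x + z)) UNIV"
    unfolding g_def by (rule has_sum_split_kernel[OF z t])
  then have "(g has_sum infsum g (range h)) (range h)"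
    by (intro has_sum_infsum summable_on_subset_banach[OF has_sum_imp_summable]) auto
  moreover have "inj h"
    by (auto simp: h_def inj_def)
  ultimately have "((g \<circ> h) has_sum infsum g (range h)) UNIV"
    by (simp add: has_sum_reindex)
  moreover have "g \<circ> h = (\<lambda>(k, m). split_kernel \<mu> z t k m x * (\<mu> z * t / (1 + real k)))"
    by (auto simp: g_def h_def split_kernel_Suc)
  moreover have "infsum g (range h) \<le> heat_kernel \<mu> t (x + z)"
    using t by (intro has_sum_mono2[OF \<open>(g has_sum _) (range h)\<close> g]) (auto simp: g_def split_kernel_nonneg)
  ultimately show ?thesis
    by auto
qed

lemma heat_kernel_log_minus_sq_le:
  assumes z: "z \<in> supp \<mu>" and t: "0 < t"
    and C: "((\<lambda>(k, m). split_kernel \<mu> z t k m x * log_minus_sq (\<mu> z * t / (1 + real k))) has_sum C) UNIV"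
  shows "heat_kernel \<mu> t x * log_minus_sq (heat_kernel \<mu> t (x + z) / heat_kernel \<mu> t x) \<le> C"
proof -
  let ?f = "heat_kernel \<mu> t"
  define w where "w = (\<lambda>i :: nat \<times> nat. split_kernel \<mu> z t (fst i) (snd i) x)"
  define u where "u = (\<lambda>i :: nat \<times> nat. \<mu> z * t / (1 + real (fst i)))"
  have w: "0 \<le> w i" for i
    using t by (simp add: w_def split_kernel_nonneg)
  have u: "0 < u i" for i
    using pos_on_supp[OF z] t by (simp add: u_def)
  have W: "(w has_sum ?f x) UNIV"
    using has_sum_split_kernel[OF z, of t x] t by (simp add: w_def case_prod_unfold)
  obtain B where B: "((\<lambda>i. w i * u i) has_sum B) UNIV" "B \<le> ?f (x + z)"
    using has_sum_split_kernel_shift[OF z, of t x] t by (auto simp: w_def u_def case_prod_unfold)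
  have C': "((\<lambda>i. w i * log_minus_sq (u i)) has_sum C) UNIV"
    using C by (simp add: w_def u_def case_prod_unfold)
  consider "?f x = 0" | "0 < ?f x"
    using heat_kernel_nonneg[of t x] t by linarith
  then show ?thesis
  proof cases
    case 1
    then show ?thesis
      using has_sum_nonneg[OF C'] w log_minus_sq_nonneg by simp
  next
    case 2
    then show ?thesis
      using has_sum_jensen_antimono[OF log_minus_sq_antimono log_minus_sq_supporting_line w u W B(1) C' 2 B(2)]
      by simp
  qed
qed

lemma has_sum_heat_kernel_log_minus_sq:
  assumes z: "z \<in> supp \<mu>" and t: "0 < t"
  shows "\<exists>P. ((\<lambda>x. heat_kernel \<mu> t x * log_minus_sq (heat_kernel \<mu> t (x + z) / heat_kernel \<mu> t x))
              has_sum P) UNIV \<and> P \<le> log_plus_sq_moment (\<mu> z * t)"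
proof -
  define \<phi> where "\<phi> k = log_minus_sq (\<mu> z * t / (1 + real k))" for k :: nat
  define f where "f x = (\<lambda>(k, m). split_kernel \<mu> z t k m x * \<phi> k)" for x
  define g where "g = (\<lambda>(k, m). exp (- t) * ((\<mu> z * t) ^ k / fact k) * (t ^ m / fact m) * (1 - \<mu> z) ^ m * \<phi> k)"
  have f_nonneg: "0 \<le> f x i" for x i
    using t by (auto simp: f_def \<phi>_def split_kernel_nonneg log_minus_sq_nonneg split: prod.split)
  have inner: "((\<lambda>x. f x i) has_sum g i) UNIV" for i
    using has_sum_cmult_left[OF has_sum_split_kernel_marginal[OF z]]
    by (cases i) (simp add: f_def g_def)
  have outer: "(g has_sum log_plus_sq_moment (\<mu> z * t)) UNIV"
  proof -
    have "\<phi> k = (log_plus ((1 + real k) / (\<mu> z * t)))\<^sup>2" for k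
      by (simp add: \<phi>_def log_minus_sq_def)
    then have "((\<lambda>k. exp (- (\<mu> z * t)) * (\<mu> z * t) ^ k / fact k * \<phi> k)
                 has_sum log_plus_sq_moment (\<mu> z * t)) UNIV"
      using has_sum_log_plus_sq_moment[of "\<mu> z * t"] pos_on_supp[OF z] t by simp
    then show ?thesis
      using pos_on_supp[OF z] le_one[of z] t unfolding g_def
      by (intro has_sum_poisson_thinning) (auto simp: \<phi>_def log_minus_sq_nonneg)
  qed
  note swap = has_sum_swap_nonneg[of f, OF f_nonneg inner outer]
  have "heat_kernel \<mu> t x * log_minus_sq (heat_kernel \<mu> t (x + z) / heat_kernel \<mu> t x) \<le> (\<Sum>\<^sub>\<infinity>i. f x i)"
    for x using swap(1)[of x] by (intro heat_kernel_log_minus_sq_le[OF z t]) (simp add: f_def \<phi>_def)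
  then show ?thesis
    using swap(2) t heat_kernel_nonneg log_minus_sq_nonneg by (intro has_sum_comparison) auto
qed

lemma has_sum_heat_kernel_log_diff_sq:
  assumes z: "z \<in> supp \<mu>" and sym: "\<mu> (- z) = \<mu> z" and t: "0 < t"
  shows "\<exists>E. ((\<lambda>x. heat_kernel \<mu> t x * (ln (heat_kernel \<mu> t (x + z)) - ln (heat_kernel \<mu> t x))\<^sup>2)
              has_sum E) UNIV \<and> E \<le> 2 * log_plus_sq_moment (\<mu> z * t)"
proof -
  let ?f = "heat_kernel \<mu> t"
  have f_nonneg: "0 \<le> ?f y" for y
    using t by (simp add: heat_kernel_nonneg)
  obtain P where P: "((\<lambda>x. ?f x * log_minus_sq (?f (x + z) / ?f x)) has_sum P) UNIV"
    "P \<le> log_plus_sq_moment (\<mu> z * t)"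
    using has_sum_heat_kernel_log_minus_sq[OF z t] by blast
  have "- z \<in> supp \<mu>"
    using z sym by (simp add: supp_def)
  then obtain Q where "((\<lambda>x. ?f x * log_minus_sq (?f (x - z) / ?f x)) has_sum Q) UNIV"
    and Q: "Q \<le> log_plus_sq_moment (\<mu> z * t)"
    using has_sum_heat_kernel_log_minus_sq[OF _ t, of "- z"] sym by auto
  then have Q_shift: "((\<lambda>x. ?f (x + z) * log_minus_sq (?f x / ?f (x + z))) has_sum Q) UNIV"
    using has_sum_translate[of "\<lambda>x. ?f x * log_minus_sq (?f (x - z) / ?f x)" z] by (simp add: add.assoc)
  have "\<exists>R. ((\<lambda>x. ?f x * log_minus_sq (?f x / ?f (x + z))) has_sum R) UNIV \<and> R \<le> Q"
    using f_nonneg log_minus_sq_nonneg mult_log_minus_sq_div_le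
    by (intro has_sum_comparison[OF Q_shift]) auto
  then obtain R where R: "((\<lambda>x. ?f x * log_minus_sq (?f x / ?f (x + z))) has_sum R) UNIV" "R \<le> Q"
    by blast
  have "?f x * (ln (?f (x + z)) - ln (?f x))\<^sup>2
      = ?f x * log_minus_sq (?f (x + z) / ?f x) + ?f x * log_minus_sq (?f x / ?f (x + z))" for x
  proof (cases "?f x = 0")
    case False
    then have "0 < ?f x" "0 < ?f (x + z)"
      using f_nonneg[of x] heat_kernel_pos_step[OF t _ z] by (auto simp: order_less_le)
    then show ?thesis
      by (simp add: ln_diff_sq_eq_log_minus_sq distrib_left)
  qed simp
  then have "((\<lambda>x. ?f x * (ln (?f (x + z)) - ln (?f x))\<^sup>2) has_sum P + R) UNIV"
    using has_sum_add[OF P(1) R(1)] by simp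
  then show ?thesis
    using P(2) Q R(2) by auto
qed

lemma has_sum_heat_kernel_carre_du_champ_log:
  assumes sym: "\<And>z. \<mu> (- z) = \<mu> z" and t: "0 < t"
  shows "\<exists>E. ((\<lambda>x. heat_kernel \<mu> t x * carre_du_champ \<mu> (\<lambda>y. ln (heat_kernel \<mu> t y)) x) has_sum E) UNIV
           \<and> 2 * t * E \<le> (\<Sum>z\<in>supp \<mu>. U_fun (\<mu> z * t))"
proof -
  let ?f = "heat_kernel \<mu> t"
  let ?D = "\<lambda>z x. ?f x * (ln (?f (x + z)) - ln (?f x))\<^sup>2"
  have "\<forall>z\<in>supp \<mu>. \<exists>E. (?D z has_sum E) UNIV \<and> E \<le> 2 * log_plus_sq_moment (\<mu> z * t)"
    using has_sum_heat_kernel_log_diff_sq[OF _ sym t] by blast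
  then obtain E where E: "\<forall>z\<in>supp \<mu>. (?D z has_sum E z) UNIV \<and> E z \<le> 2 * log_plus_sq_moment (\<mu> z * t)"
    by (rule bchoice[elim_format]) blast
  have "((\<lambda>x. \<Sum>z\<in>supp \<mu>. \<mu> z / 2 * ?D z x) has_sum (\<Sum>z\<in>supp \<mu>. \<mu> z / 2 * E z)) UNIV"
    using E finite_supp by (intro has_sum_sum has_sum_cmult_right) auto
  moreover have "(\<lambda>x. ?f x * carre_du_champ \<mu> (\<lambda>y. ln (?f y)) x) = (\<lambda>x. \<Sum>z\<in>supp \<mu>. \<mu> z / 2 * ?D z x)"
    by (simp add: carre_du_champ_def sum_distrib_left fun_eq_iff mult_ac)
  moreover have "2 * t * (\<mu> z / 2 * E z) \<le> U_fun (\<mu> z * t)" if "z \<in> supp \<mu>" for z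
  proof -
    have "t * \<mu> z * E z \<le> t * \<mu> z * (2 * log_plus_sq_moment (\<mu> z * t))"
      using E that nonneg[of z] t by (intro mult_left_mono) auto
    then show ?thesis
      by (simp add: U_fun_eq mult_ac)
  qed
  then have "2 * t * (\<Sum>z\<in>supp \<mu>. \<mu> z / 2 * E z) \<le> (\<Sum>z\<in>supp \<mu>. U_fun (\<mu> z * t))"
    unfolding sum_distrib_left by (rule sum_mono)
  ultimately show ?thesis
    by auto
qed

end

theorem proposition1:
  fixes \<mu> :: "'a::group_add \<Rightarrow> real" and t :: real
  assumes nonneg: "\<forall>z. \<mu> z \<ge> 0"
    and fin: "finite (supp \<mu>)"
    and prob: "(\<Sum>z\<in>supp \<mu>. \<mu> z) = 1"
    and A1: "\<forall>x z. \<mu> (x + z - x) = \<mu> z"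
    and A2: "\<forall>z. \<mu> (- z) = \<mu> z"
    and t: "t \<ge> 0"
  shows "\<exists>E. ((\<lambda>x. heat_kernel \<mu> t x *
                 carre_du_champ \<mu> (\<lambda>y. ln (heat_kernel \<mu> t y)) x) has_sum E) UNIV
           \<and> 2 * t * E \<le> (\<Sum>z\<in>supp \<mu>. U_fun (\<mu> z * t))"
proof -
  interpret central_random_walk \<mu>
    using nonneg fin prob A1 by unfold_locales auto
  show ?thesis
  proof (cases "t = 0")
    case True
    let ?F = "\<lambda>x. heat_kernel \<mu> 0 x * carre_du_champ \<mu> (\<lambda>y. ln (heat_kernel \<mu> 0 y)) x"
    have "(?F has_sum ?F 0) UNIV"
      by (rule has_sum_finite_neutralI[of "{0}"]) (auto simp: heat_kernel_time_zero)
    then show ?thesis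
      using True by (auto simp: U_fun_def)
  next
    case False
    then show ?thesis
      using has_sum_heat_kernel_carre_du_champ_log A2 t by simp
  qed
qed

end
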